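(* Let $(M,J)$ be an almost complex manifold and $\nabla$ a connection on $M$, with torsion $T$. Let $S\in T^1_2M$ be the tensor $$S(X,Y)=-(\nabla J)(X,Y)+(\nabla J)(Y,X)+T(JX,Y)-JT(X,Y).$$ Then: (1) $J^{G,\nabla}=\widetilde{J}$ if and only if $S=-\tfrac12 JN_J$; (2) $J^{G,\nabla}=J^{H,\nabla}$ if and only if $T(JX,Y)=T(X,JY)$ for all vector fields $X,Y$; (3) for every almost complex and minimal connection $\nabla$ on $M$, $J^{G,\nabla}=\widetilde{J}=J^{H,\nabla}$.
   Context: $M$ is a smooth real manifold of even dimension $n$, $J$ an almost complex structure on $M$ (a $(1,1)$-tensor field with $J^2=-\mathrm{Id}$), $\pi:T^*M\to M$ the cotangent bundle. Local coordinates $(x_1,\dots,x_n)$ on $M$ induce coordinates $(x_1,\dots,x_n,p_1,\dots,p_n)$ on $T^*M$; Einstein summation is used; $J=J^k_l\,dx^l\otimes\partial_{x_k}$. For a connection $\nabla$: torsion $T(X,Y)=\nabla_XY-\nabla_YX-[X,Y]$; $(\nabla J)(X,Y):=\nabla_X(JY)-J\nabla_XY$; $\widetilde\nabla:=\nabla-\tfrac12T$. $\nabla$ is almost complex if $\nabla_X(JY)=J\nabla_XY$ for all $X,Y$, and minimal if $T=\tfrac14N_J$, where $N_J(X,Y)=[JX,JY]-J[X,JY]-J[JX,Y]-[X,Y]$ is the Nijenhuis tensor. $\nabla$ induces a connection on $T^*M$ by $(\nabla_Xs)(Y)=X(s(Y))-s(\nabla_XY)$. For $\xi\in T^*_xM$,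 the horizontal space is $H^\nabla_\xi=\{d_xs(X): X\in T_xM,\ s$ a section of $T^*M$ with $s(x)=\xi,\ \nabla_Xs=0\}$; then $T_\xi T^*M=H^\nabla_\xi\oplus T^*_xM$ (the second summand being the vertical space), $d_\xi\pi$ is an isomorphism $H^\nabla_\xi\to T_xM$, and $v^\nabla$ denotes projection to $T^*_xM$ along $H^\nabla_\xi$. The generalized horizontal lift $J^{G,\nabla}$ is the almost complex structure on $T^*M$ defined, for $Y=(X,v^\nabla(Y))\in H^\nabla_\xi\oplus T^*_xM$, by $J^{G,\nabla}Y=(JX,{}^tJ(v^\nabla(Y)))$ where $JX:=(d_\xi\pi|_{H^\nabla_\xi})^{-1}(J(x)d_\xi\pi(X))$. Contraction: for $R=R^k_{ij}dx^i\otimes dx^j\otimes\partial_{x_k}\in T^1_2M$, $\gamma(R):=p_kR^k_{ij}\,dx^i\otimes\partial_{p_j}$, a $(1,1)$-tensor on $T^*M$. Let $\theta=p_idx^i$ be the Liouville form, $\omega_{st}=d\theta$, and $\theta(J)=p_kJ^k_ldx^l$; the complete lift $J^c$ is the $(1,1)$-tensor on $T^*M$ defined by $d(\theta(J))=\omega_{st}(J^c\cdot,\cdot)$ (locally, in block form w.r.t. $(x,p)$: upper-left $J^i_j$, upper-right $0$, lower-left $p_k(\partial_{x_j}J^k_i-\partial_{x_i}J^k_j)$, lower-right $J^j_i$). Satô's (complete) lift is $\widetilde J:=J^c-\tfrac12\gamma(JN_J)$. The horizontal lift (Ishihara–Yano) is $J^{H,\nabla}:=J^c+\gamma([\widetilde\nabla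 J])$ with $[\widetilde\nabla J](X,Y)=-(\widetilde\nabla J)(X,Y)+(\widetilde\nabla J)(Y,X)$. *)

theory Defs
  imports "HOL-Analysis.Analysis"
begin

text \<open>Everything is formulated in a coordinate chart: an open set U of real^'n
  (coordinates x_1..x_n indexed by the finite type 'n).  Points of T*M over U are
  pairs (x,p) with x in U and p :: real^'n (p$k = p_k); tangent vectors to T*M
  are pairs (a,b) with a the x-part and b the p-part.\<close>

fun Ck_on :: "nat \<Rightarrow> ('a::real_normed_vector \<Rightarrow> 'b::real_normed_vector) \<Rightarrow> 'a set \<Rightarrow> bool" where
  "Ck_on 0 f U = continuous_on U f"
| "Ck_on (Suc k) f U = (f differentiable_on U \<and>
      (\<forall>v. Ck_on k (\<lambda>x. frechet_derivative f (at x) v) U))"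

definition smooth_on :: "('a::real_normed_vector \<Rightarrow> 'b::real_normed_vector) \<Rightarrow> 'a set \<Rightarrow> bool" where
  "smooth_on f U = (\<forall>k. Ck_on k f U)"

type_synonym 'n vf = "real^'n \<Rightarrow> real^'n"
type_synonym 'n acs = "real^'n \<Rightarrow> real^'n^'n"   \<comment> \<open>(J x)$k$l = J^k_l(x)\<close>
type_synonym 'n conn = "real^'n \<Rightarrow> 'n \<Rightarrow> 'n \<Rightarrow> 'n \<Rightarrow> real"
  \<comment> \<open>\<Gamma> x i j k = \<Gamma>^k_{ij}(x), i.e. nabla_{d_i} d_j = sum_k \<Gamma>^k_{ij} d_k\<close>

definition smooth_conn :: "'n::finite conn \<Rightarrow> (real^'n) set \<Rightarrow> bool" where
  "smooth_conn \<Gamma> U = (\<forall>i j k. smooth_on (\<lambda>x. \<Gamma> x i j k) U)"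

definition almost_complex_structure :: "'n::finite acs \<Rightarrow> (real^'n) set \<Rightarrow> bool" where
  "almost_complex_structure J U = (smooth_on J U \<and> (\<forall>x\<in>U. J x ** J x = - mat 1))"

definition Jf :: "'n::finite acs \<Rightarrow> 'n vf \<Rightarrow> 'n vf" where
  "Jf J X = (\<lambda>x. J x *v X x)"

definition lie_bracket :: "'n::finite vf \<Rightarrow> 'n vf \<Rightarrow> 'n vf" where
  "lie_bracket X Y = (\<lambda>x. frechet_derivative Y (at x) (X x) - frechet_derivative X (at x) (Y x))"

definition cov :: "'n::finite conn \<Rightarrow> 'n vf \<Rightarrow> 'n vf \<Rightarrow> 'n vf" where
  "cov \<Gamma> X Y = (\<lambda>x. frechet_derivative Y (at x) (X x)
     + (\<chi> k. \<Sum>i\<in>UNIV. \<Sum>j\<in>UNIV. \<Gamma> x i j k * X x $ i * Y x $ j))"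

definition torsion :: "'n::finite conn \<Rightarrow> 'n vf \<Rightarrow> 'n vf \<Rightarrow> 'n vf" where
  "torsion \<Gamma> X Y = (\<lambda>x. cov \<Gamma> X Y x - cov \<Gamma> Y X x - lie_bracket X Y x)"

definition nablaJ :: "'n::finite conn \<Rightarrow> 'n acs \<Rightarrow> 'n vf \<Rightarrow> 'n vf \<Rightarrow> 'n vf" where
  "nablaJ \<Gamma> J X Y = (\<lambda>x. cov \<Gamma> X (Jf J Y) x - J x *v cov \<Gamma> X Y x)"

definition nijenhuis :: "'n::finite acs \<Rightarrow> 'n vf \<Rightarrow> 'n vf \<Rightarrow> 'n vf" where
  "nijenhuis J X Y = (\<lambda>x. lie_bracket (Jf J X) (Jf J Y) x - J x *v lie_bracket X (Jf J Y) x
      - J x *v lie_bracket (Jf J X) Y x - lie_bracket X Y x)"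

definition S_tensor :: "'n::finite conn \<Rightarrow> 'n acs \<Rightarrow> 'n vf \<Rightarrow> 'n vf \<Rightarrow> 'n vf" where
  "S_tensor \<Gamma> J X Y = (\<lambda>x. - nablaJ \<Gamma> J X Y x + nablaJ \<Gamma> J Y X x
      + torsion \<Gamma> (Jf J X) Y x - J x *v torsion \<Gamma> X Y x)"

definition cov_tilde :: "'n::finite conn \<Rightarrow> 'n vf \<Rightarrow> 'n vf \<Rightarrow> 'n vf" where
  "cov_tilde \<Gamma> X Y = (\<lambda>x. cov \<Gamma> X Y x - (1/2) *\<^sub>R torsion \<Gamma> X Y x)"

definition nabla_tilde_J :: "'n::finite conn \<Rightarrow> 'n acs \<Rightarrow> 'n vf \<Rightarrow> 'n vf \<Rightarrow> 'n vf" where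
  "nabla_tilde_J \<Gamma> J X Y = (\<lambda>x. cov_tilde \<Gamma> X (Jf J Y) x - J x *v cov_tilde \<Gamma> X Y x)"

definition bracket_nabla_tilde_J :: "'n::finite conn \<Rightarrow> 'n acs \<Rightarrow> 'n vf \<Rightarrow> 'n vf \<Rightarrow> 'n vf" where
  "bracket_nabla_tilde_J \<Gamma> J X Y = (\<lambda>x. - nabla_tilde_J \<Gamma> J X Y x + nabla_tilde_J \<Gamma> J Y X x)"

definition JN :: "'n::finite acs \<Rightarrow> 'n vf \<Rightarrow> 'n vf \<Rightarrow> 'n vf" where
  "JN J X Y = (\<lambda>x. J x *v nijenhuis J X Y x)"

definition smooth_vf :: "'n::finite vf \<Rightarrow> (real^'n) set \<Rightarrow> bool" where
  "smooth_vf X U = smooth_on X U"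

definition almost_complex_conn :: "'n::finite conn \<Rightarrow> 'n acs \<Rightarrow> (real^'n) set \<Rightarrow> bool" where
  "almost_complex_conn \<Gamma> J U = (\<forall>X Y. smooth_vf X U \<longrightarrow> smooth_vf Y U \<longrightarrow>
      (\<forall>x\<in>U. cov \<Gamma> X (Jf J Y) x = J x *v cov \<Gamma> X Y x))"

definition minimal_conn :: "'n::finite conn \<Rightarrow> 'n acs \<Rightarrow> (real^'n) set \<Rightarrow> bool" where
  "minimal_conn \<Gamma> J U = (\<forall>X Y. smooth_vf X U \<longrightarrow> smooth_vf Y U \<longrightarrow>
      (\<forall>x\<in>U. torsion \<Gamma> X Y x = (1/4) *\<^sub>R nijenhuis J X Y x))"

type_synonym 'n tt = "real^'n \<Rightarrow> real^'n \<Rightarrow> ((real^'n) \<times> (real^'n)) \<Rightarrow> ((real^'n) \<times> (real^'n))"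

definition coord_vf :: "'n::finite \<Rightarrow> 'n vf" where
  "coord_vf i = (\<lambda>x. axis i 1)"

text \<open>Contraction gamma(R) = p_k R^k_{ij} dx^i (x) d/dp_j, where
  R^k_{ij}(x) = (R(d_i,d_j)(x))$k.\<close>
definition gamma :: "('n::finite vf \<Rightarrow> 'n vf \<Rightarrow> 'n vf) \<Rightarrow> 'n tt" where
  "gamma R = (\<lambda>x p (a, b). (0, \<chi> j. \<Sum>i\<in>UNIV. \<Sum>k\<in>UNIV.
       p $ k * R (coord_vf i) (coord_vf j) x $ k * a $ i))"

definition dJ :: "'n::finite acs \<Rightarrow> real^'n \<Rightarrow> 'n \<Rightarrow> real^'n^'n" where
  "dJ J x j = frechet_derivative J (at x) (axis j 1)"

text \<open>Complete lift J^c, in the block form given in the paper.\<close>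
definition complete_lift :: "'n::finite acs \<Rightarrow> 'n tt" where
  "complete_lift J = (\<lambda>x p (a, b).
     (J x *v a,
      \<chi> i. (\<Sum>j\<in>UNIV. (\<Sum>k\<in>UNIV. p $ k * (dJ J x j $ k $ i - dJ J x i $ k $ j)) * a $ j)
           + (\<Sum>j\<in>UNIV. J x $ j $ i * b $ j)))"

definition tt_add :: "'n::finite tt \<Rightarrow> 'n tt \<Rightarrow> 'n tt" where
  "tt_add A B = (\<lambda>x p v. A x p v + B x p v)"

definition tt_scale :: "real \<Rightarrow> 'n::finite tt \<Rightarrow> 'n tt" where
  "tt_scale c A = (\<lambda>x p v. c *\<^sub>R A x p v)"

definition sato_lift :: "'n::finite acs \<Rightarrow> 'n tt" where
  "sato_lift J = tt_add (complete_lift J) (tt_scale (-1/2) (gamma (JN J)))"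

definition horizontal_lift :: "'n::finite conn \<Rightarrow> 'n acs \<Rightarrow> 'n tt" where
  "horizontal_lift \<Gamma> J = tt_add (complete_lift J) (gamma (bracket_nabla_tilde_J \<Gamma> J))"

text \<open>Horizontal space of the induced connection on T*M at xi = (x,p): the horizontal
  vector over a in T_xM is d_x s(a) for a section s with s(x)=p and nabla_a s = 0,
  i.e. (a, (p_k \<Gamma>^k_{ij} a^i)_j).\<close>
definition hor :: "'n::finite conn \<Rightarrow> real^'n \<Rightarrow> real^'n \<Rightarrow> real^'n \<Rightarrow> (real^'n) \<times> (real^'n)" where
  "hor \<Gamma> x p a = (a, \<chi> j. \<Sum>i\<in>UNIV. \<Sum>k\<in>UNIV. p $ k * \<Gamma> x i j k * a $ i)"

definition vproj :: "'n::finite conn \<Rightarrow> real^'n \<Rightarrow> real^'n \<Rightarrow> (real^'n) \<times> (real^'n) \<Rightarrow> real^'n" where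
  "vproj \<Gamma> x p Y = snd Y - snd (hor \<Gamma> x p (fst Y))"

text \<open>Generalized horizontal lift J^{G,nabla}: horizontal part (a) goes to hor(J a),
  vertical part alpha goes to tJ alpha = alpha o J.\<close>
definition gen_horizontal_lift :: "'n::finite conn \<Rightarrow> 'n acs \<Rightarrow> 'n tt" where
  "gen_horizontal_lift \<Gamma> J = (\<lambda>x p Y.
     hor \<Gamma> x p (J x *v fst Y) + (0, transpose (J x) *v vproj \<Gamma> x p Y))"

definition tt_eq_on :: "(real^'n) set \<Rightarrow> 'n::finite tt \<Rightarrow> 'n tt \<Rightarrow> bool" where
  "tt_eq_on U A B = (\<forall>x\<in>U. \<forall>p v. A x p v = B x p v)"

end

theory Submission
  imports Defs
begin

(* In a chart the almost complex structures on T*M in question all map (a, b) to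
   (J a, \<omega>(a) + tJ b) with \<omega> linear in the fibre coordinate p, and they differ by
   contractions \<gamma>(R). Sato's lift is J^c + \<gamma>(-1/2 J N_J) and the horizontal lift is
   J^c + \<gamma>([\<nabla>~J]) by definition; the generalized horizontal lift turns out to be
   J^c + \<gamma>(S). Since \<gamma> is injective on tensor fields, (1) follows, and (2) follows from
   [\<nabla>~J](X,Y) = S(X,Y) - 1/2 (T(JX,Y) - T(X,JY)). For (3), \<nabla>J = 0 expresses the derivative
   of J through the Christoffel symbols, which gives N_J(JX,Y) = N_J(X,JY) = -J N_J(X,Y);
   together with T = N_J/4 this yields S = -1/2 J N_J and T(JX,Y) = T(X,JY). *)

lemma bounded_bilinear_matrix_vector_mult:
  "bounded_bilinear (\<lambda>(A::real^'n::finite^'m::finite) v. A *v v)"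
  by (rule bilinear_conv_bounded_bilinear[THEN iffD1])
     (auto simp: bilinear_def algebra_simps intro!: linearI
       simp add: scaleR_matrix_vector_assoc matrix_scaleR_vector_ac)

lemma frechet_derivative_matrix_vector_mult:
  fixes A :: "real^'k::finite \<Rightarrow> real^'n::finite^'m::finite" and v :: "real^'k \<Rightarrow> real^'n"
  assumes "A differentiable at x" "v differentiable at x"
  shows "frechet_derivative (\<lambda>y. A y *v v y) (at x) h
    = A x *v frechet_derivative v (at x) h + frechet_derivative A (at x) h *v v x"
proof -
  have "((\<lambda>y. A y *v v y) has_derivative
      (\<lambda>h. A x *v frechet_derivative v (at x) h + frechet_derivative A (at x) h *v v x)) (at x)"
    using bounded_bilinear.FDERIV[OF bounded_bilinear_matrix_vector_mult
        assms[THEN frechet_derivative_works[THEN iffD1]]] by simp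
  then show ?thesis
    by (simp add: frechet_derivative_at[symmetric])
qed

lemma Ck_on_const: "Ck_on k (\<lambda>x. c) U"
proof (induction k arbitrary: c)
  case (Suc k)
  have "frechet_derivative (\<lambda>x. c) (at y) = (\<lambda>h. 0)" for y
    by (rule frechet_derivative_at[symmetric]) simp
  with Suc show ?case by simp
qed simp

lemma smooth_vf_const: "smooth_vf (\<lambda>x. c) U"
  by (simp add: smooth_vf_def smooth_on_def Ck_on_const)

lemma smooth_on_differentiable:
  assumes "smooth_on f U" "open U" "x \<in> U"
  shows "f differentiable at x"
  using assms unfolding smooth_on_def
  by (metis Ck_on.simps(2) differentiable_on_eq_differentiable_at)

lemma smooth_vf_differentiable: "smooth_vf X U \<Longrightarrow> open U \<Longrightarrow> x \<in> U \<Longrightarrow> X differentiable at x"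
  unfolding smooth_vf_def by (rule smooth_on_differentiable)

lemma matrix_vector_mult_scaleR_right: "(A::real^'n::finite^'m::finite) *v (c *\<^sub>R v) = c *\<^sub>R (A *v v)"
  by (simp add: scaleR_matrix_vector_assoc matrix_scaleR_vector_ac)

lemma matrix_vector_mult_uminus_right: "(A::real^'n::finite^'m::finite) *v (- v) = - (A *v v)"
  using matrix_vector_mult_scaleR_right[of A "-1" v] by simp

lemma almost_complex_structureD:
  assumes "open U" "almost_complex_structure J U" "x \<in> U"
  shows "J differentiable at x" and "J x *v (J x *v v) = - v"
proof -
  show "J differentiable at x"
    using assms smooth_on_differentiable unfolding almost_complex_structure_def by blast
  have "J x ** J x = - mat 1"
    using assms unfolding almost_complex_structure_def by blast
  then have "J x *v (J x *v v) = (0 - mat 1) *v v"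
    by (simp add: matrix_vector_mul_assoc)
  then show "J x *v (J x *v v) = - v"
    by (simp only: matrix_vector_mult_diff_rdistrib) simp
qed

section \<open>Pointwise expressions of the tensors\<close>

definition christoffel :: "'n::finite conn \<Rightarrow> real^'n \<Rightarrow> real^'n \<Rightarrow> real^'n \<Rightarrow> real^'n" where
  "christoffel \<Gamma> x u v = (\<chi> k. \<Sum>i\<in>UNIV. \<Sum>j\<in>UNIV. \<Gamma> x i j k * u $ i * v $ j)"

lemma bilinear_christoffel: "bilinear (christoffel \<Gamma> x)"
  by (auto simp: bilinear_def christoffel_def vec_eq_iff algebra_simps sum.distrib sum_distrib_left
      intro!: linearI)

definition DJ :: "'n::finite acs \<Rightarrow> real^'n \<Rightarrow> real^'n \<Rightarrow> real^'n \<Rightarrow> real^'n" where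
  "DJ J x u v = frechet_derivative J (at x) u *v v"

lemma bilinear_DJ:
  assumes "J differentiable at x"
  shows "bilinear (DJ J x)"
proof -
  have "linear (frechet_derivative J (at x))"
    using assms frechet_derivative_works has_derivative_linear by blast
  then show ?thesis
    by (auto simp: bilinear_def DJ_def linear_add linear_scale algebra_simps
        matrix_vector_mult_scaleR_right scaleR_matrix_vector_assoc intro!: linearI)
qed

lemmas christoffel_simps =
  bilinear_ladd[OF bilinear_christoffel] bilinear_radd[OF bilinear_christoffel]
  bilinear_lsub[OF bilinear_christoffel] bilinear_rsub[OF bilinear_christoffel]
  bilinear_lmul[OF bilinear_christoffel] bilinear_rmul[OF bilinear_christoffel]
  bilinear_lneg[OF bilinear_christoffel] bilinear_rneg[OF bilinear_christoffel]

lemmas DJ_simps =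
  bilinear_ladd[OF bilinear_DJ] bilinear_radd[OF bilinear_DJ]
  bilinear_lsub[OF bilinear_DJ] bilinear_rsub[OF bilinear_DJ]
  bilinear_lmul[OF bilinear_DJ] bilinear_rmul[OF bilinear_DJ]
  bilinear_lneg[OF bilinear_DJ] bilinear_rneg[OF bilinear_DJ]

definition torsion_at :: "'n::finite conn \<Rightarrow> real^'n \<Rightarrow> real^'n \<Rightarrow> real^'n \<Rightarrow> real^'n" where
  "torsion_at \<Gamma> x u v = christoffel \<Gamma> x u v - christoffel \<Gamma> x v u"

definition nablaJ_at :: "'n::finite conn \<Rightarrow> 'n acs \<Rightarrow> real^'n \<Rightarrow> real^'n \<Rightarrow> real^'n \<Rightarrow> real^'n" where
  "nablaJ_at \<Gamma> J x u v = DJ J x u v + christoffel \<Gamma> x u (J x *v v) - J x *v christoffel \<Gamma> x u v"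

definition nijenhuis_at :: "'n::finite acs \<Rightarrow> real^'n \<Rightarrow> real^'n \<Rightarrow> real^'n \<Rightarrow> real^'n" where
  "nijenhuis_at J x u v = DJ J x (J x *v u) v - DJ J x (J x *v v) u - J x *v DJ J x u v + J x *v DJ J x v u"

definition S_at :: "'n::finite conn \<Rightarrow> 'n acs \<Rightarrow> real^'n \<Rightarrow> real^'n \<Rightarrow> real^'n \<Rightarrow> real^'n" where
  "S_at \<Gamma> J x u v = - nablaJ_at \<Gamma> J x u v + nablaJ_at \<Gamma> J x v u
     + torsion_at \<Gamma> x (J x *v u) v - J x *v torsion_at \<Gamma> x u v"

(* The right-hand side is the fibre-linear part of J^{G,\<nabla>} - J^c,
   see gen_horizontal_lift_eq_tt_add_gamma. *)

lemma S_at_eq: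
  "S_at \<Gamma> J x u v = christoffel \<Gamma> x (J x *v u) v - christoffel \<Gamma> x u (J x *v v)
     - (DJ J x u v - DJ J x v u)"
  by (simp add: S_at_def nablaJ_at_def torsion_at_def algebra_simps)

lemma cov_eq: "cov \<Gamma> X Y x = frechet_derivative Y (at x) (X x) + christoffel \<Gamma> x (X x) (Y x)"
  by (simp add: cov_def christoffel_def)

lemma torsion_eq_torsion_at: "torsion \<Gamma> X Y x = torsion_at \<Gamma> x (X x) (Y x)"
  by (simp add: torsion_def torsion_at_def cov_eq lie_bracket_def)

lemma frechet_derivative_Jf:
  assumes "J differentiable at x" "Y differentiable at x"
  shows "frechet_derivative (Jf J Y) (at x) h
    = J x *v frechet_derivative Y (at x) h + DJ J x h (Y x)"
  unfolding Jf_def DJ_def by (rule frechet_derivative_matrix_vector_mult[OF assms])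

lemma nablaJ_eq_nablaJ_at:
  assumes "J differentiable at x" "Y differentiable at x"
  shows "nablaJ \<Gamma> J X Y x = nablaJ_at \<Gamma> J x (X x) (Y x)"
  unfolding nablaJ_def cov_eq frechet_derivative_Jf[OF assms]
  by (simp add: nablaJ_at_def Jf_def algebra_simps)

lemma nijenhuis_eq_nijenhuis_at:
  assumes "J differentiable at x" "X differentiable at x" "Y differentiable at x"
    and "\<And>v. J x *v (J x *v v) = - v"
  shows "nijenhuis J X Y x = nijenhuis_at J x (X x) (Y x)"
  unfolding nijenhuis_def lie_bracket_def frechet_derivative_Jf[OF assms(1,2)]
    frechet_derivative_Jf[OF assms(1,3)]
  by (simp add: nijenhuis_at_def Jf_def assms(4) algebra_simps)

lemma S_tensor_eq_S_at:
  assumes "J differentiable at x" "X differentiable at x" "Y differentiable at x"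
  shows "S_tensor \<Gamma> J X Y x = S_at \<Gamma> J x (X x) (Y x)"
  by (simp add: S_tensor_def S_at_def nablaJ_eq_nablaJ_at assms torsion_eq_torsion_at Jf_def)

lemma bracket_nabla_tilde_J_eq:
  "bracket_nabla_tilde_J \<Gamma> J X Y x = S_tensor \<Gamma> J X Y x
     - (1/2) *\<^sub>R (torsion \<Gamma> (Jf J X) Y x - torsion \<Gamma> X (Jf J Y) x)"
  by (simp add: bracket_nabla_tilde_J_def nabla_tilde_J_def cov_tilde_def S_tensor_def nablaJ_def
      torsion_eq_torsion_at torsion_at_def matrix_vector_mult_scaleR_right algebra_simps)

section \<open>Tensor fields and the contraction \<gamma>\<close>

definition tensor_on :: "(real^'n::finite) set \<Rightarrow> ('n vf \<Rightarrow> 'n vf \<Rightarrow> 'n vf)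
    \<Rightarrow> (real^'n \<Rightarrow> real^'n \<Rightarrow> real^'n \<Rightarrow> real^'n) \<Rightarrow> bool" where
  "tensor_on U R r \<longleftrightarrow> (\<forall>x\<in>U. bilinear (r x) \<and>
     (\<forall>X Y. X differentiable at x \<longrightarrow> Y differentiable at x \<longrightarrow> R X Y x = r x (X x) (Y x)))"

lemma tensor_onD:
  assumes "tensor_on U R r" "x \<in> U"
  shows "bilinear (r x)"
    and "X differentiable at x \<Longrightarrow> Y differentiable at x \<Longrightarrow> R X Y x = r x (X x) (Y x)"
  using assms unfolding tensor_on_def by blast+

lemma tensor_on_eq_iff:
  assumes "open U" "tensor_on U R r" "tensor_on U R' r'"
  shows "(\<forall>X Y. smooth_vf X U \<longrightarrow> smooth_vf Y U \<longrightarrow> (\<forall>x\<in>U. R X Y x = R' X Y x))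
    \<longleftrightarrow> (\<forall>x\<in>U. r x = r' x)"
proof
  assume fields: "\<forall>X Y. smooth_vf X U \<longrightarrow> smooth_vf Y U \<longrightarrow> (\<forall>x\<in>U. R X Y x = R' X Y x)"
  show "\<forall>x\<in>U. r x = r' x"
  proof (intro ballI ext)
    fix x u v assume "x \<in> U"
    then have "R (\<lambda>_. u) (\<lambda>_. v) x = R' (\<lambda>_. u) (\<lambda>_. v) x"
      using fields smooth_vf_const by blast
    with \<open>x \<in> U\<close> show "r x u v = r' x u v"
      using tensor_onD(2)[OF assms(2)] tensor_onD(2)[OF assms(3)] by simp
  qed
next
  assume "\<forall>x\<in>U. r x = r' x"
  then show "\<forall>X Y. smooth_vf X U \<longrightarrow> smooth_vf Y U \<longrightarrow> (\<forall>x\<in>U. R X Y x = R' X Y x)"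
    using tensor_onD(2)[OF assms(2)] tensor_onD(2)[OF assms(3)]
      smooth_vf_differentiable[OF _ assms(1)] by simp
qed

lemma bilinear_S_at:
  assumes "J differentiable at x"
  shows "bilinear (S_at \<Gamma> J x)"
  unfolding bilinear_def S_at_eq
  using assms by (auto simp: christoffel_simps DJ_simps matrix_vector_mult_scaleR_right algebra_simps
      intro!: linearI)

lemma bilinear_nijenhuis_at:
  assumes "J differentiable at x"
  shows "bilinear (nijenhuis_at J x)"
  unfolding bilinear_def nijenhuis_at_def
  using assms by (auto simp: DJ_simps matrix_vector_mult_scaleR_right algebra_simps intro!: linearI)

lemma bilinear_torsion_at: "bilinear (torsion_at \<Gamma> x)"
  unfolding bilinear_def torsion_at_def
  by (auto simp: christoffel_simps algebra_simps intro!: linearI)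

lemma tensor_on_S_tensor:
  assumes "\<forall>x\<in>U. J differentiable at x"
  shows "tensor_on U (S_tensor \<Gamma> J) (S_at \<Gamma> J)"
  using assms by (simp add: tensor_on_def bilinear_S_at S_tensor_eq_S_at)

lemma tensor_on_JN:
  assumes "\<forall>x\<in>U. J differentiable at x" "\<forall>x\<in>U. \<forall>v. J x *v (J x *v v) = - v"
  shows "tensor_on U (\<lambda>X Y x. c *\<^sub>R JN J X Y x) (\<lambda>x u v. c *\<^sub>R (J x *v nijenhuis_at J x u v))"
proof -
  have "bilinear (\<lambda>u v. c *\<^sub>R (J x *v nijenhuis_at J x u v))" if "x \<in> U" for x
    using bilinear_nijenhuis_at[of J x] assms(1) that unfolding bilinear_def
    by (auto simp: linear_iff algebra_simps matrix_vector_mult_scaleR_right)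
  then show ?thesis
    using assms by (simp add: tensor_on_def JN_def nijenhuis_eq_nijenhuis_at)
qed

lemma tensor_on_bracket_nabla_tilde_J:
  assumes "\<forall>x\<in>U. J differentiable at x"
  shows "tensor_on U (bracket_nabla_tilde_J \<Gamma> J) (\<lambda>x u v. S_at \<Gamma> J x u v
    - (1/2) *\<^sub>R (torsion_at \<Gamma> x (J x *v u) v - torsion_at \<Gamma> x u (J x *v v)))"
proof -
  have "bilinear (\<lambda>u v. S_at \<Gamma> J x u v
    - (1/2) *\<^sub>R (torsion_at \<Gamma> x (J x *v u) v - torsion_at \<Gamma> x u (J x *v v)))" if "x \<in> U" for x
    using bilinear_S_at[of J x \<Gamma>] bilinear_torsion_at[of \<Gamma> x] assms that unfolding bilinear_def
    by (auto simp: linear_iff algebra_simps matrix_vector_mult_scaleR_right)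
  then show ?thesis
    using assms by (simp add: tensor_on_def bracket_nabla_tilde_J_eq S_tensor_eq_S_at
        torsion_eq_torsion_at Jf_def)
qed

lemma gamma_tensor_on:
  assumes "tensor_on U R r" "x \<in> U"
  shows "gamma R x p (a, b) = (0, \<chi> j. p \<bullet> r x a (axis j 1))"
proof -
  have "(\<Sum>i\<in>UNIV. \<Sum>k\<in>UNIV. p $ k * r x (axis i 1) (axis j 1) $ k * a $ i) = p \<bullet> r x a (axis j 1)"
    for j
  proof -
    have lin: "linear (\<lambda>u. r x u (axis j 1))"
      using tensor_onD(1)[OF assms] by (simp add: bilinear_def)
    have "r x (\<Sum>i\<in>UNIV. a $ i *\<^sub>R axis i 1) (axis j 1)
        = (\<Sum>i\<in>UNIV. a $ i *\<^sub>R r x (axis i 1) (axis j 1))"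
      using linear_sum[OF lin, of "\<lambda>i. a $ i *\<^sub>R axis i 1" UNIV] linear_scale[OF lin] by simp
    moreover have "(\<Sum>i\<in>UNIV. a $ i *\<^sub>R axis i 1) = a"
      using basis_expansion[of a] by (simp add: scalar_mult_eq_scaleR)
    ultimately have "p \<bullet> r x a (axis j 1) = (\<Sum>i\<in>UNIV. a $ i * (p \<bullet> r x (axis i 1) (axis j 1)))"
      by (simp add: inner_sum_right)
    then show ?thesis
      by (simp add: inner_vec_def sum_distrib_left mult_ac)
  qed
  then show ?thesis
    using tensor_onD(2)[OF assms] by (simp add: gamma_def coord_vf_def)
qed

lemma tt_eq_on_sym: "tt_eq_on U A B \<Longrightarrow> tt_eq_on U B A"
  by (simp add: tt_eq_on_def)

lemma tt_eq_on_trans: "tt_eq_on U A B \<Longrightarrow> tt_eq_on U B C \<Longrightarrow> tt_eq_on U A C"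
  by (simp add: tt_eq_on_def)

lemma tt_eq_on_tt_add_gamma_iff:
  assumes "tensor_on U R r" "tensor_on U R' r'"
  shows "tt_eq_on U (tt_add A (gamma R)) (tt_add A (gamma R')) \<longleftrightarrow> (\<forall>x\<in>U. r x = r' x)"
proof
  assume eq: "tt_eq_on U (tt_add A (gamma R)) (tt_add A (gamma R'))"
  show "\<forall>x\<in>U. r x = r' x"
  proof
    fix x assume x: "x \<in> U"
    have "r x a (axis j 1) = r' x a (axis j 1)" for a j
    proof (rule vec_eq_iff[THEN iffD2], intro allI)
      fix k
      have "gamma R x (axis k 1) (a, 0) = gamma R' x (axis k 1) (a, 0)"
        using eq x by (simp add: tt_eq_on_def tt_add_def)
      then show "r x a (axis j 1) $ k = r' x a (axis j 1) $ k"
        by (simp add: gamma_tensor_on[OF assms(1) x] gamma_tensor_on[OF assms(2) x] vec_eq_iff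
            inner_axis')
    qed
    then show "r x = r' x"
      by (intro bilinear_eq_stdbasis[OF tensor_onD(1)[OF assms(1) x] tensor_onD(1)[OF assms(2) x]])
         (auto simp: Basis_vec_def)
  qed
next
  assume "\<forall>x\<in>U. r x = r' x"
  then show "tt_eq_on U (tt_add A (gamma R)) (tt_add A (gamma R'))"
    by (simp add: tt_eq_on_def tt_add_def split_paired_All gamma_tensor_on[OF assms(1)]
        gamma_tensor_on[OF assms(2)])
qed

lemma tt_scale_gamma: "tt_scale c (gamma R) = gamma (\<lambda>X Y x. c *\<^sub>R R X Y x)"
  by (simp add: tt_scale_def gamma_def fun_eq_iff split_paired_All vec_eq_iff sum_distrib_left
      mult_ac)

lemma sato_lift_eq_tt_add_gamma:
  "sato_lift J = tt_add (complete_lift J) (gamma (\<lambda>X Y x. - (1/2) *\<^sub>R JN J X Y x))"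
  by (simp add: sato_lift_def tt_scale_gamma)

section \<open>The lifts in coordinates\<close>

lemma inner_snd_hor: "snd (hor \<Gamma> x p u) \<bullet> v = p \<bullet> christoffel \<Gamma> x u v"
proof -
  have "snd (hor \<Gamma> x p u) \<bullet> v = (\<Sum>j\<in>UNIV. \<Sum>i\<in>UNIV. \<Sum>k\<in>UNIV. p $ k * \<Gamma> x i j k * u $ i * v $ j)"
    by (simp add: hor_def inner_vec_def sum_distrib_right)
  also have "\<dots> = (\<Sum>k\<in>UNIV. \<Sum>i\<in>UNIV. \<Sum>j\<in>UNIV. p $ k * \<Gamma> x i j k * u $ i * v $ j)"
    by (rule trans[OF sum.swap], rule trans[OF sum.cong[OF refl sum.swap]], rule sum.swap)
  also have "\<dots> = p \<bullet> christoffel \<Gamma> x u v"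
    by (simp add: christoffel_def inner_vec_def sum_distrib_left mult_ac)
  finally show ?thesis .
qed

lemma snd_hor_component: "snd (hor \<Gamma> x p u) $ j = p \<bullet> christoffel \<Gamma> x u (axis j 1)"
  using inner_snd_hor[of \<Gamma> x p u "axis j 1"] by (simp add: inner_axis)

lemma transpose_matrix_vector_component: "(transpose A *v w) $ j = w \<bullet> (A *v axis j 1)"
  by (simp add: matrix_vector_mult_def transpose_def inner_vec_def axis_def mult_ac
     if_distrib cong: if_cong)

lemma snd_gen_horizontal_lift:
  "snd (gen_horizontal_lift \<Gamma> J x p (a, b)) $ j
    = p \<bullet> (christoffel \<Gamma> x (J x *v a) (axis j 1) - christoffel \<Gamma> x a (J x *v axis j 1))
      + (transpose (J x) *v b) $ j"
  by (simp add: gen_horizontal_lift_def vproj_def matrix_vector_mult_diff_distrib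
      transpose_matrix_vector_component snd_hor_component inner_snd_hor inner_diff_right
      flip: transpose_matrix_vector)

lemma frechet_derivative_expansion:
  assumes "J differentiable at x"
  shows "frechet_derivative J (at x) a = (\<Sum>i\<in>UNIV. a $ i *\<^sub>R dJ J x i)"
proof -
  have lin: "linear (frechet_derivative J (at x))"
    using assms frechet_derivative_works has_derivative_linear by blast
  have "a = (\<Sum>i\<in>UNIV. a $ i *\<^sub>R axis i 1)"
    using basis_expansion[of a] by (simp add: scalar_mult_eq_scaleR)
  also have "frechet_derivative J (at x) \<dots> = (\<Sum>i\<in>UNIV. a $ i *\<^sub>R dJ J x i)"
    by (simp add: linear_sum[OF lin] linear_scale[OF lin] dJ_def)
  finally show ?thesis .
qed

lemma snd_complete_lift:
  assumes "J differentiable at x"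
  shows "snd (complete_lift J x p (a, b)) $ j
    = p \<bullet> (DJ J x a (axis j 1) - DJ J x (axis j 1) a) + (transpose (J x) *v b) $ j"
proof -
  have DJ_left: "p \<bullet> DJ J x a (axis j 1) = (\<Sum>i\<in>UNIV. \<Sum>k\<in>UNIV. p $ k * dJ J x i $ k $ j * a $ i)"
  proof -
    have "p \<bullet> DJ J x a (axis j 1) = (\<Sum>k\<in>UNIV. \<Sum>i\<in>UNIV. p $ k * dJ J x i $ k $ j * a $ i)"
      by (simp add: DJ_def frechet_derivative_expansion[OF assms] inner_vec_def matrix_vector_mult_def
          axis_def sum_distrib_left mult_ac if_distrib cong: if_cong)
    also have "\<dots> = (\<Sum>i\<in>UNIV. \<Sum>k\<in>UNIV. p $ k * dJ J x i $ k $ j * a $ i)"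
      by (rule sum.swap)
    finally show ?thesis .
  qed
  have DJ_right: "p \<bullet> DJ J x (axis j 1) a = (\<Sum>i\<in>UNIV. \<Sum>k\<in>UNIV. p $ k * dJ J x j $ k $ i * a $ i)"
  proof -
    have "p \<bullet> DJ J x (axis j 1) a = (\<Sum>k\<in>UNIV. \<Sum>i\<in>UNIV. p $ k * dJ J x j $ k $ i * a $ i)"
      by (simp add: DJ_def dJ_def[symmetric] inner_vec_def matrix_vector_mult_def sum_distrib_left
          mult_ac)
    also have "\<dots> = (\<Sum>i\<in>UNIV. \<Sum>k\<in>UNIV. p $ k * dJ J x j $ k $ i * a $ i)"
      by (rule sum.swap)
    finally show ?thesis .
  qed
  have "(transpose (J x) *v b) $ j = (\<Sum>i\<in>UNIV. J x $ i $ j * b $ i)"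
    by (simp add: matrix_vector_mult_def transpose_def mult_ac)
  with DJ_left DJ_right show ?thesis
    by (simp add: complete_lift_def inner_diff_right sum_distrib_left sum_distrib_right sum_subtractf
        left_diff_distrib right_diff_distrib mult_ac)
qed

lemma gen_horizontal_lift_eq_tt_add_gamma:
  fixes J :: "'n::finite acs"
  assumes "\<forall>x\<in>U. J differentiable at x"
  shows "tt_eq_on U (gen_horizontal_lift \<Gamma> J) (tt_add (complete_lift J) (gamma (S_tensor \<Gamma> J)))"
  unfolding tt_eq_on_def
proof (intro ballI allI)
  fix x p and v :: "(real^'n) \<times> (real^'n)"
  assume x: "x \<in> U"
  obtain a b where v: "v = (a, b)"
    by (cases v)
  note gamma_S = gamma_tensor_on[OF tensor_on_S_tensor[OF assms] x]
  have "fst (gen_horizontal_lift \<Gamma> J x p v) = fst (tt_add (complete_lift J) (gamma (S_tensor \<Gamma> J)) x p v)"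
    by (simp add: v gen_horizontal_lift_def hor_def tt_add_def complete_lift_def gamma_S)
  moreover have "snd (gen_horizontal_lift \<Gamma> J x p v) $ j
      = snd (tt_add (complete_lift J) (gamma (S_tensor \<Gamma> J)) x p v) $ j" for j
    using assms x by (simp add: v tt_add_def snd_gen_horizontal_lift snd_complete_lift gamma_S S_at_eq
        inner_diff_right)
  ultimately show "gen_horizontal_lift \<Gamma> J x p v = tt_add (complete_lift J) (gamma (S_tensor \<Gamma> J)) x p v"
    by (simp add: prod_eq_iff vec_eq_iff)
qed

lemma gen_horizontal_lift_eq_sato_lift_iff:
  assumes "open U" "almost_complex_structure J U"
  shows "tt_eq_on U (gen_horizontal_lift \<Gamma> J) (sato_lift J) \<longleftrightarrow>
    (\<forall>X Y. smooth_vf X U \<longrightarrow> smooth_vf Y U \<longrightarrow>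
      (\<forall>x\<in>U. S_tensor \<Gamma> J X Y x = - (1/2) *\<^sub>R JN J X Y x))"
proof -
  have diff: "\<forall>x\<in>U. J differentiable at x" and J2: "\<forall>x\<in>U. \<forall>v. J x *v (J x *v v) = - v"
    using almost_complex_structureD[OF assms] by blast+
  note S = tensor_on_S_tensor[OF diff, of \<Gamma>] and N = tensor_on_JN[OF diff J2, of "- (1/2)"]
  have "tt_eq_on U (gen_horizontal_lift \<Gamma> J) (sato_lift J)
      \<longleftrightarrow> tt_eq_on U (tt_add (complete_lift J) (gamma (S_tensor \<Gamma> J))) (sato_lift J)"
    using gen_horizontal_lift_eq_tt_add_gamma[OF diff] tt_eq_on_sym tt_eq_on_trans by blast
  also have "\<dots> \<longleftrightarrow> (\<forall>x\<in>U. S_at \<Gamma> J x = (\<lambda>u v. - (1/2) *\<^sub>R (J x *v nijenhuis_at J x u v)))"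
    unfolding sato_lift_eq_tt_add_gamma by (rule tt_eq_on_tt_add_gamma_iff[OF S N])
  also have "\<dots> \<longleftrightarrow> (\<forall>X Y. smooth_vf X U \<longrightarrow> smooth_vf Y U \<longrightarrow>
      (\<forall>x\<in>U. S_tensor \<Gamma> J X Y x = - (1/2) *\<^sub>R JN J X Y x))"
    by (rule tensor_on_eq_iff[OF assms(1) S N, symmetric])
  finally show ?thesis .
qed

lemma gen_horizontal_lift_eq_horizontal_lift_iff:
  assumes "open U" "almost_complex_structure J U"
  shows "tt_eq_on U (gen_horizontal_lift \<Gamma> J) (horizontal_lift \<Gamma> J) \<longleftrightarrow>
    (\<forall>X Y. smooth_vf X U \<longrightarrow> smooth_vf Y U \<longrightarrow>
      (\<forall>x\<in>U. torsion \<Gamma> (Jf J X) Y x = torsion \<Gamma> X (Jf J Y) x))"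
proof -
  have diff: "\<forall>x\<in>U. J differentiable at x"
    using almost_complex_structureD[OF assms] by blast
  note S = tensor_on_S_tensor[OF diff, of \<Gamma>] and B = tensor_on_bracket_nabla_tilde_J[OF diff, of \<Gamma>]
  have "tt_eq_on U (gen_horizontal_lift \<Gamma> J) (horizontal_lift \<Gamma> J)
      \<longleftrightarrow> tt_eq_on U (tt_add (complete_lift J) (gamma (S_tensor \<Gamma> J))) (horizontal_lift \<Gamma> J)"
    using gen_horizontal_lift_eq_tt_add_gamma[OF diff] tt_eq_on_sym tt_eq_on_trans by blast
  also have "\<dots> \<longleftrightarrow> (\<forall>X Y. smooth_vf X U \<longrightarrow> smooth_vf Y U \<longrightarrow>
      (\<forall>x\<in>U. S_tensor \<Gamma> J X Y x = bracket_nabla_tilde_J \<Gamma> J X Y x))"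
    unfolding horizontal_lift_def tt_eq_on_tt_add_gamma_iff[OF S B]
    by (rule tensor_on_eq_iff[OF assms(1) S B, symmetric])
  also have "\<dots> \<longleftrightarrow> (\<forall>X Y. smooth_vf X U \<longrightarrow> smooth_vf Y U \<longrightarrow>
      (\<forall>x\<in>U. torsion \<Gamma> (Jf J X) Y x = torsion \<Gamma> X (Jf J Y) x))"
    by (simp add: bracket_nabla_tilde_J_eq)
  finally show ?thesis .
qed

section \<open>Almost complex minimal connections\<close>

lemma almost_complex_conn_nablaJ_at:
  assumes "almost_complex_conn \<Gamma> J U" "x \<in> U" "J differentiable at x"
  shows "nablaJ_at \<Gamma> J x u v = 0"
proof -
  have "cov \<Gamma> (\<lambda>_. u) (Jf J (\<lambda>_. v)) x = J x *v cov \<Gamma> (\<lambda>_. u) (\<lambda>_. v) x"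
    using assms(1,2) smooth_vf_const unfolding almost_complex_conn_def by blast
  then show ?thesis
    using nablaJ_eq_nablaJ_at[OF assms(3), of "\<lambda>_. v" \<Gamma> "\<lambda>_. u"] by (simp add: nablaJ_def)
qed

lemma minimal_conn_torsion_at:
  assumes "minimal_conn \<Gamma> J U" "x \<in> U" "J differentiable at x" "\<And>v. J x *v (J x *v v) = - v"
  shows "torsion_at \<Gamma> x u v = (1/4) *\<^sub>R nijenhuis_at J x u v"
proof -
  have "torsion \<Gamma> (\<lambda>_. u) (\<lambda>_. v) x = (1/4) *\<^sub>R nijenhuis J (\<lambda>_. u) (\<lambda>_. v) x"
    using assms(1,2) smooth_vf_const unfolding minimal_conn_def by blast
  then show ?thesis
    by (simp add: torsion_eq_torsion_at nijenhuis_eq_nijenhuis_at assms(3,4))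
qed

lemma nijenhuis_at_J:
  assumes "\<And>u v. nablaJ_at \<Gamma> J x u v = 0" "\<And>v. J x *v (J x *v v) = - v"
  shows "nijenhuis_at J x (J x *v u) v = - (J x *v nijenhuis_at J x u v)"
    and "nijenhuis_at J x u (J x *v v) = - (J x *v nijenhuis_at J x u v)"
proof -
  have DJ: "DJ J x u v = J x *v christoffel \<Gamma> x u v - christoffel \<Gamma> x u (J x *v v)" for u v
    using assms(1)[of u v] by (simp add: nablaJ_at_def algebra_simps)
  show "nijenhuis_at J x (J x *v u) v = - (J x *v nijenhuis_at J x u v)"
    and "nijenhuis_at J x u (J x *v v) = - (J x *v nijenhuis_at J x u v)"
    by (simp_all add: nijenhuis_at_def DJ assms(2) christoffel_simps matrix_vector_mult_uminus_right
        algebra_simps)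
qed

lemma almost_complex_minimal_conn_lifts:
  assumes "open U" "almost_complex_structure J U"
    and "almost_complex_conn \<Gamma> J U" "minimal_conn \<Gamma> J U"
  shows "tt_eq_on U (gen_horizontal_lift \<Gamma> J) (sato_lift J)"
    and "tt_eq_on U (gen_horizontal_lift \<Gamma> J) (horizontal_lift \<Gamma> J)"
proof -
  have pointwise: "S_at \<Gamma> J x u v = - (1/2) *\<^sub>R (J x *v nijenhuis_at J x u v)
      \<and> torsion_at \<Gamma> x (J x *v u) v = torsion_at \<Gamma> x u (J x *v v)" if x: "x \<in> U" for x u v
  proof -
    note diff = almost_complex_structureD(1)[OF assms(1,2) x]
      and J2 = almost_complex_structureD(2)[OF assms(1,2) x]
    note nabla = almost_complex_conn_nablaJ_at[OF assms(3) x diff]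
      and T = minimal_conn_torsion_at[OF assms(4) x diff J2]
      and N = nijenhuis_at_J[OF nabla J2]
    show ?thesis
      by (simp add: S_at_def nabla T N matrix_vector_mult_scaleR_right)
  qed
  show "tt_eq_on U (gen_horizontal_lift \<Gamma> J) (sato_lift J)"
    unfolding gen_horizontal_lift_eq_sato_lift_iff[OF assms(1,2)]
    using pointwise smooth_vf_differentiable[OF _ assms(1)] almost_complex_structureD[OF assms(1,2)]
    by (simp add: S_tensor_eq_S_at JN_def nijenhuis_eq_nijenhuis_at)
  show "tt_eq_on U (gen_horizontal_lift \<Gamma> J) (horizontal_lift \<Gamma> J)"
    unfolding gen_horizontal_lift_eq_horizontal_lift_iff[OF assms(1,2)]
    using pointwise by (simp add: torsion_eq_torsion_at Jf_def)
qed

theorem theorem2p4: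
  fixes U :: "(real^'n::finite) set" and J :: "'n acs" and \<Gamma> :: "'n conn"
  assumes "open U" and "even CARD('n)"
    and "almost_complex_structure J U"
    and "smooth_conn \<Gamma> U"
  shows "(tt_eq_on U (gen_horizontal_lift \<Gamma> J) (sato_lift J) \<longleftrightarrow>
            (\<forall>X Y. smooth_vf X U \<longrightarrow> smooth_vf Y U \<longrightarrow>
               (\<forall>x\<in>U. S_tensor \<Gamma> J X Y x = - (1/2) *\<^sub>R JN J X Y x)))
       \<and> (tt_eq_on U (gen_horizontal_lift \<Gamma> J) (horizontal_lift \<Gamma> J) \<longleftrightarrow>
            (\<forall>X Y. smooth_vf X U \<longrightarrow> smooth_vf Y U \<longrightarrow>
               (\<forall>x\<in>U. torsion \<Gamma> (Jf J X) Y x = torsion \<Gamma> X (Jf J Y) x)))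
       \<and> (\<forall>\<Gamma>'. smooth_conn \<Gamma>' U \<longrightarrow> almost_complex_conn \<Gamma>' J U \<longrightarrow> minimal_conn \<Gamma>' J U \<longrightarrow>
            tt_eq_on U (gen_horizontal_lift \<Gamma>' J) (sato_lift J)
            \<and> tt_eq_on U (sato_lift J) (horizontal_lift \<Gamma>' J))"
  using gen_horizontal_lift_eq_sato_lift_iff[OF assms(1,3)]
    gen_horizontal_lift_eq_horizontal_lift_iff[OF assms(1,3)]
    almost_complex_minimal_conn_lifts[OF assms(1,3)] tt_eq_on_sym tt_eq_on_trans
  by meson

end
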